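(* Let $d:\mathbb{N}\to\mathbb{N}$ be a function with $d(n)^3\log n/n\to 0$ as $n\to\infty$. Then there is a function $\eta:\mathbb{N}\to[0,\infty)$ with $\eta(n)\to 0$ as $n\to\infty$ such that for every $n$ (for which $d(n)$-regular graphs on $n$ vertices exist), every $d$-regular graph $G$ on $n$ vertices, where $d=d(n)$, contains a spanning subgraph $H$ such that for every integer $k$ with $0\le k\le d$, $$\left|m(H,k)-\frac{n}{d+1}\right|\le \eta(n)\,\frac{n}{d+1}.$$
   Context: All graphs are finite and simple (no loops, no parallel edges). For a graph $G$ and an integer $k\ge 0$, $m(G,k)$ denotes the number of vertices of degree exactly $k$ in $G$, and $m(G)=\max_k m(G,k)$. A spanning subgraph of $G$ is a subgraph with the same vertex set as $G$. *)

theory Defs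
  imports Complex_Main
begin

definition is_graph :: "nat \<Rightarrow> nat set set \<Rightarrow> bool" where
  "is_graph n E \<longleftrightarrow> (\<forall>e\<in>E. e \<subseteq> {..<n} \<and> card e = 2)"

definition degree :: "nat set set \<Rightarrow> nat \<Rightarrow> nat" where
  "degree E v = card {e\<in>E. v \<in> e}"

definition regular :: "nat \<Rightarrow> nat set set \<Rightarrow> nat \<Rightarrow> bool" where
  "regular n E d \<longleftrightarrow> (\<forall>v<n. degree E v = d)"

definition mdeg :: "nat \<Rightarrow> nat set set \<Rightarrow> nat \<Rightarrow> nat" where
  "mdeg n H k = card {v\<in>{..<n}. degree H v = k}"

definition spanning_subgraph :: "nat \<Rightarrow> nat set set \<Rightarrow> nat set set \<Rightarrow> bool" where
  "spanning_subgraph n H G \<longleftrightarrow> is_graph n H \<and> H \<subseteq> G"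

end

theory Submission
  imports Defs "HOL-Library.FuncSet"
begin

(* Give every vertex an independent uniform weight x v in {0..<N}, a discretisation of uniform
   weights in [0, 1], and keep the edges uv with x u + x v < N. Given x v = a, the degree of v is
   binomial with parameter about 1 - a / N; since every Bernstein polynomial of degree d integrates
   to 1 / (d + 1), each degree k <= d then has probability about 1 / (d + 1). For non-adjacent v, w
   with c common neighbours, conditioning on all weights except those of v and its private
   neighbours gives P(deg v = deg w) <= min 1 ((c + 1) / (d - c + 1)) + O(d^3 / N)
   <= (1 + 4 c) / (d + 1) + O(d^3 / N). As the numbers c(v, w) sum to n d^2, the expected value
   of sum_k (m(H, k) - n / (d + 1))^2 is at most 6 n (d + 1), so for some H every deviation is at
   most sqrt (6 n (d + 1)) = eta n * n / (d + 1) with eta n = sqrt (6 (d + 1)^3 / n). *)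

section \<open>Counting maps into \<open>{..<N}\<close>\<close>

lemma card_PiE_Un_filter:
  assumes "finite A" "finite J" "A \<inter> J = {}" "\<And>i. finite (T i)"
  shows "card {x \<in> PiE (A \<union> J) T. P x}
    = (\<Sum>z\<in>PiE J T. card {y \<in> PiE A T. P (override_on z y A)})"
proof -
  let ?S = "Sigma (PiE J T) (\<lambda>z. {y \<in> PiE A T. P (override_on z y A)})"
  have image: "{x \<in> PiE (A \<union> J) T. P x} = (\<lambda>(z, y). override_on z y A) ` ?S"
  proof (rule set_eqI, rule iffI)
    fix x assume x: "x \<in> {x \<in> PiE (A \<union> J) T. P x}"
    have split: "x = override_on (restrict x J) (restrict x A) A"
      using x by (auto simp: override_on_def fun_eq_iff PiE_def extensional_def)
    then have "(restrict x J, restrict x A) \<in> ?S"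
      using x by (auto simp: PiE_def)
    with split show "x \<in> (\<lambda>(z, y). override_on z y A) ` ?S"
      by (intro image_eqI[where x="(restrict x J, restrict x A)"]) auto
  next
    fix x assume "x \<in> (\<lambda>(z, y). override_on z y A) ` ?S"
    then show "x \<in> {x \<in> PiE (A \<union> J) T. P x}"
      by (auto simp: override_on_def PiE_def extensional_def Pi_def)
  qed
  have inj: "inj_on (\<lambda>(z, y). override_on z y A) ?S"
  proof (rule inj_onI, clarsimp)
    fix z y z' y'
    assume "z \<in> PiE J T" "y \<in> PiE A T" "z' \<in> PiE J T" "y' \<in> PiE A T"
      and "override_on z y A = override_on z' y' A"
    then show "z = z' \<and> y = y'" using assms(3)
      by (auto simp: fun_eq_iff override_on_def PiE_def extensional_def) (metis disjoint_iff)+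
  qed
  have "card {x \<in> PiE (A \<union> J) T. P x} = card ?S"
    unfolding image by (rule card_image[OF inj])
  also have "\<dots> = (\<Sum>z\<in>PiE J T. card {y \<in> PiE A T. P (override_on z y A)})"
    by (rule card_SigmaI) (auto intro!: finite_PiE assms)
  finally show ?thesis .
qed

lemma card_PiE_insert_filter:
  assumes "x \<notin> S" "finite S" "\<And>i. finite (T i)"
  shows "card {f \<in> PiE (insert x S) T. P f} = (\<Sum>a\<in>T x. card {g \<in> PiE S T. P (g(x := a))})"
proof -
  let ?S = "Sigma (T x) (\<lambda>a. {g \<in> PiE S T. P (g(x := a))})"
  have image: "{f \<in> PiE (insert x S) T. P f} = (\<lambda>(y, g). g(x := y)) ` ?S"
    unfolding PiE_insert_eq by auto
  have inj: "inj_on (\<lambda>(y, g). g(x := y)) ?S"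
    by (rule inj_on_subset[OF inj_combinator[OF assms(1)]]) auto
  have "card {f \<in> PiE (insert x S) T. P f} = card ?S"
    unfolding image by (rule card_image[OF inj])
  also have "\<dots> = (\<Sum>a\<in>T x. card {g \<in> PiE S T. P (g(x := a))})"
    by (rule card_SigmaI) (auto intro!: finite_PiE assms)
  finally show ?thesis .
qed

lemma sum_lessThan_if_less:
  assumes "t \<le> N"
  shows "(\<Sum>a<N. if a < t then X else Y) = t * X + (N - t) * (Y :: nat)"
proof -
  have "(\<Sum>a<N. if a < t then X else Y)
      = (\<Sum>a\<in>{..<N} \<inter> {a. a < t}. X) + (\<Sum>a\<in>{..<N} \<inter> - {a. a < t}. Y)"
    by (rule sum.If_cases) simp
  moreover have "{..<N} \<inter> {a. a < t} = {..<t}" using assms by auto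
  moreover have "{..<N} \<inter> - {a. a < t} = {t..<N}" by auto
  ultimately show ?thesis by simp
qed

lemma binomial_term_Suc:
  fixes t s :: nat
  shows "t * (if j = 0 then 0 else (m choose (j - 1)) * t ^ (j - 1) * s ^ (m - (j - 1)))
      + s * ((m choose j) * t ^ j * s ^ (m - j))
    = (Suc m choose j) * t ^ j * s ^ (Suc m - j)"
proof (cases j)
  case (Suc i)
  show ?thesis
  proof (cases "Suc i \<le> m")
    case True
    then have "m - i = Suc (m - Suc i)" by simp
    moreover have "t * (A * t ^ i * s ^ Suc p) + s * (B * t ^ Suc i * s ^ p)
        = (A + B) * t ^ Suc i * s ^ Suc p" for A B p :: nat
      by (simp add: algebra_simps)
    ultimately show ?thesis using Suc True by simp
  next
    case False
    then show ?thesis using Suc by (cases "i = m") (auto simp: binomial_eq_0)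
  qed
qed simp

lemma card_PiE_count_below:
  assumes "finite M" "t \<le> N"
  shows "card {y \<in> PiE M (\<lambda>_. {..<N}). card {u \<in> M. y u < t} = j}
    = (card M choose j) * t ^ j * (N - t) ^ (card M - j)"
  using assms(1)
proof (induction M arbitrary: j rule: finite_induct)
  case empty
  then show ?case by (cases j) auto
next
  case (insert x M)
  define F where "F j = card {y \<in> PiE M (\<lambda>_. {..<N}). card {u \<in> M. y u < t} = j}" for j
  have count_upd: "card {u \<in> insert x M. (g(x := a)) u < t} = of_bool (a < t) + card {u \<in> M. g u < t}"
    for g a
  proof -
    have "{u \<in> M. (g(x := a)) u < t} = {u \<in> M. g u < t}" using insert(2) by auto
    moreover have "{u \<in> insert x M. (g(x := a)) u < t}
        = (if a < t then insert x {u \<in> M. (g(x := a)) u < t} else {u \<in> M. (g(x := a)) u < t})"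
      by auto
    ultimately show ?thesis using insert(1,2) by simp
  qed
  have "card {y \<in> PiE (insert x M) (\<lambda>_. {..<N}). card {u \<in> insert x M. y u < t} = j}
      = (\<Sum>a<N. card {g \<in> PiE M (\<lambda>_. {..<N}). card {u \<in> insert x M. (g(x := a)) u < t} = j})"
    by (rule card_PiE_insert_filter) (use insert in auto)
  also have "\<dots> = (\<Sum>a<N. card {g \<in> PiE M (\<lambda>_. {..<N}). of_bool (a < t) + card {u \<in> M. g u < t} = j})"
    by (simp only: count_upd)
  also have "\<dots> = (\<Sum>a<N. if a < t then (if j = 0 then 0 else F (j - 1)) else F j)"
    by (intro sum.cong refl) (auto simp: F_def intro: arg_cong[where f=card])
  also have "\<dots> = t * (if j = 0 then 0 else F (j - 1)) + (N - t) * F j"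
    by (rule sum_lessThan_if_less[OF assms(2)])
  also have "\<dots> = (card (insert x M) choose j) * t ^ j * (N - t) ^ (card (insert x M) - j)"
    by (simp only: F_def insert.IH card_insert_disjoint[OF insert(1,2)] binomial_term_Suc)
  finally show ?case .
qed

lemma sum_choose_mult_choose_diff:
  "(\<Sum>t\<le>N. (t choose a) * ((N - t) choose b)) = Suc N choose (a + b + 1)"
proof (induction N arbitrary: b)
  case 0
  then show ?case by (cases b) (auto simp: binomial_eq_0)
next
  case (Suc N)
  show ?case
  proof (cases b)
    case 0
    then show ?thesis
      using sum_choose_upper[where n="Suc N" and m=a] by (simp del: binomial_Suc_Suc)
  next
    case (Suc c)
    have "(\<Sum>t\<le>Suc N. (t choose a) * ((Suc N - t) choose b))
        = (\<Sum>t\<le>N. (t choose a) * ((Suc N - t) choose b))"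
      using Suc by simp
    also have "\<dots> = (\<Sum>t\<le>N. (t choose a) * ((N - t) choose c) + (t choose a) * ((N - t) choose b))"
    proof (rule sum.cong[OF refl])
      fix t assume "t \<in> {..N}"
      then have "Suc N - t = Suc (N - t)" by auto
      then show "(t choose a) * ((Suc N - t) choose b)
          = (t choose a) * ((N - t) choose c) + (t choose a) * ((N - t) choose b)"
        using Suc by (simp add: algebra_simps)
    qed
    also have "\<dots> = (Suc N choose (a + c + 1)) + (Suc N choose (a + b + 1))"
      by (simp add: sum.distrib Suc.IH)
    also have "\<dots> = Suc (Suc N) choose (a + b + 1)" using Suc by simp
    finally show ?thesis .
  qed
qed

lemma pow_le_choose_mult_fact: "(n + 1 - k) ^ k \<le> (n choose k) * fact k"
proof (induction k arbitrary: n)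
  case 0
  then show ?case by simp
next
  case (Suc k)
  show ?case
  proof (cases n)
    case 0
    then show ?thesis by simp
  next
    case (Suc n')
    have "(n choose Suc k) * fact (Suc k) = (Suc k * (n choose Suc k)) * fact k"
      by (simp add: algebra_simps)
    also have "\<dots> = n * (n' choose k) * fact k"
      using binomial_absorption[of k n] Suc by (simp only: diff_Suc_1)
    also have "\<dots> \<ge> n * (n' + 1 - k) ^ k" using Suc.IH[of n'] by (simp add: mult.assoc)
    finally have *: "n * (n' + 1 - k) ^ k \<le> (n choose Suc k) * fact (Suc k)" .
    have "(n + 1 - Suc k) ^ Suc k = (n' + 1 - k) * (n' + 1 - k) ^ k" using Suc by simp
    also have "\<dots> \<le> n * (n' + 1 - k) ^ k" using Suc by (intro mult_right_mono) auto
    finally show ?thesis using * by linarith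
  qed
qed

section \<open>Riemann sums of Bernstein polynomials\<close>

text \<open>\<open>bernstein_sum m j N / N ^ Suc m\<close> is a Riemann sum for the Bernstein polynomial
  \<open>(m choose j) s ^ j (1 - s) ^ (m - j)\<close>, whose integral over \<open>[0, 1]\<close> is \<open>1 / (m + 1)\<close>
  for every \<open>j \<le> m\<close>.\<close>

definition bernstein_sum :: "nat \<Rightarrow> nat \<Rightarrow> nat \<Rightarrow> nat" where
  "bernstein_sum m j N = (\<Sum>t\<le>N. (m choose j) * t ^ j * (N - t) ^ (m - j))"

lemma sum_bernstein_sum: "(\<Sum>j\<le>m. bernstein_sum m j N) = Suc N * N ^ m"
proof -
  have "(\<Sum>j\<le>m. bernstein_sum m j N) = (\<Sum>t\<le>N. \<Sum>j\<le>m. (m choose j) * t ^ j * (N - t) ^ (m - j))"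
    unfolding bernstein_sum_def by (rule sum.swap)
  also have "\<dots> = (\<Sum>t\<le>N. N ^ m)"
  proof (rule sum.cong[OF refl])
    fix t assume "t \<in> {..N}"
    then show "(\<Sum>j\<le>m. (m choose j) * t ^ j * (N - t) ^ (m - j)) = N ^ m"
      using binomial[of t "N - t" m] by simp
  qed
  finally show ?thesis by simp
qed

lemma bernstein_sum_ge_choose:
  assumes "j \<le> m"
  shows "fact m * (Suc N choose Suc m) \<le> bernstein_sum m j N"
proof -
  have "fact m * (Suc N choose Suc m) = (\<Sum>t\<le>N. fact m * ((t choose j) * ((N - t) choose (m - j))))"
    using sum_choose_mult_choose_diff[where N=N and a=j and b="m - j"] assms
    by (simp only: sum_distrib_left[symmetric]) (simp del: binomial_Suc_Suc)
  also have "\<dots> \<le> bernstein_sum m j N"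
    unfolding bernstein_sum_def
  proof (rule sum_mono)
    fix t
    have "fact m = (m choose j) * fact j * fact (m - j)"
      using binomial_fact_lemma[OF assms] by (simp add: algebra_simps)
    then have "fact m * ((t choose j) * ((N - t) choose (m - j)))
        = (m choose j) * ((t choose j) * fact j) * (((N - t) choose (m - j)) * fact (m - j))"
      by (simp add: algebra_simps)
    also have "\<dots> \<le> (m choose j) * t ^ j * (N - t) ^ (m - j)"
      using mult_mono[OF binomial_fact_pow[of t j] binomial_fact_pow[of "N - t" "m - j"]]
      by (simp add: mult.assoc mult_left_mono)
    finally show "fact m * ((t choose j) * ((N - t) choose (m - j)))
        \<le> (m choose j) * t ^ j * (N - t) ^ (m - j)" .
  qed
  finally show ?thesis .
qed

lemma bernstein_sum_lower:
  assumes "j \<le> m" "m \<le> N" "0 < N"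
  shows "(real N ^ Suc m - real (Suc m) * m * real N ^ m) / Suc m \<le> real (bernstein_sum m j N)"
proof -
  have "(N + 1 - m) ^ Suc m \<le> (Suc N choose Suc m) * fact (Suc m)"
    using pow_le_choose_mult_fact[of "Suc N" "Suc m"] by simp
  also have "\<dots> = Suc m * (fact m * (Suc N choose Suc m))" by (simp add: algebra_simps)
  also have "\<dots> \<le> Suc m * bernstein_sum m j N"
    by (rule mult_left_mono[OF bernstein_sum_ge_choose[OF assms(1)]]) simp
  finally have choose_bound: "real ((N + 1 - m) ^ Suc m) \<le> real (Suc m) * real (bernstein_sum m j N)"
    by (metis of_nat_le_iff of_nat_mult)
  have Bernoulli: "real N ^ Suc m - real (Suc m) * m * real N ^ m \<le> real (N - m) ^ Suc m"
  proof -
    have "-1 \<le> - (real m / real N)" using assms by (simp add: field_simps)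
    then have "1 + real (Suc m) * (- (real m / real N)) \<le> (1 + - (real m / real N)) ^ Suc m"
      by (rule Bernoulli_inequality)
    then have "real N ^ Suc m * (1 + real (Suc m) * (- (real m / real N)))
        \<le> real N ^ Suc m * (1 + - (real m / real N)) ^ Suc m"
      by (rule mult_left_mono) simp
    also have "\<dots> = (real N * (1 + - (real m / real N))) ^ Suc m" by (simp add: power_mult_distrib)
    also have "real N * (1 + - (real m / real N)) = real (N - m)" using assms by (simp add: field_simps)
    also have "real N ^ Suc m * (1 + real (Suc m) * (- (real m / real N)))
        = real N ^ Suc m - real (Suc m) * m * real N ^ m"
      using assms by (simp add: field_simps)
    finally show ?thesis .
  qed
  have "real (N - m) ^ Suc m \<le> real ((N + 1 - m) ^ Suc m)"
    unfolding of_nat_power by (rule power_mono) auto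
  with choose_bound Bernoulli show ?thesis by (simp add: field_simps)
qed

text \<open>The upper bound follows from the lower bounds for the other \<open>m\<close> values of \<open>j\<close>
  and the total \<open>sum_bernstein_sum\<close>.\<close>

lemma bernstein_sum_upper:
  assumes "j \<le> m" "m \<le> N" "0 < N"
  shows "real (bernstein_sum m j N) \<le> real N ^ Suc m / Suc m + (Suc m)\<^sup>2 * real N ^ m"
proof -
  define L where "L = (real N ^ Suc m - real (Suc m) * m * real N ^ m) / Suc m"
  have "real (Suc N * N ^ m) = (\<Sum>i\<le>m. real (bernstein_sum m i N))"
    unfolding sum_bernstein_sum[symmetric] by simp
  also have "\<dots> = real (bernstein_sum m j N) + (\<Sum>i\<in>{..m} - {j}. real (bernstein_sum m i N))"
    using assms by (subst sum.remove[of _ j]) auto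
  also have "(\<Sum>i\<in>{..m} - {j}. real (bernstein_sum m i N)) \<ge> (\<Sum>i\<in>{..m} - {j}. L)"
    unfolding L_def by (rule sum_mono, rule bernstein_sum_lower) (use assms in auto)
  moreover have "(\<Sum>i\<in>{..m} - {j}. L) = real m * L"
    using assms by simp
  ultimately have "real (bernstein_sum m j N) + real m * L \<le> real (Suc N * N ^ m)"
    by linarith
  then have "real (bernstein_sum m j N) \<le> (real N + 1) * real N ^ m - real m * L"
    by (simp add: algebra_simps)
  also have "\<dots> = real N ^ Suc m / Suc m + (1 + real m * m) * real N ^ m"
    unfolding L_def by (simp add: field_simps)
  also have "\<dots> \<le> real N ^ Suc m / Suc m + (Suc m)\<^sup>2 * real N ^ m"
    by (intro add_left_mono mult_right_mono) (auto simp: power2_eq_square)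
  finally show ?thesis .
qed

lemma sum_bernstein_reflected_le:
  assumes "m \<le> N" "0 < N"
  shows "real (\<Sum>a<N. (m choose j) * (N - a) ^ j * (N - (N - a)) ^ (m - j))
    \<le> real N ^ Suc m / Suc m + (Suc m)\<^sup>2 * real N ^ m"
proof (cases "j \<le> m")
  case True
  have "(\<Sum>a<N. (m choose j) * (N - a) ^ j * (N - (N - a)) ^ (m - j))
      = (\<Sum>t\<in>(\<lambda>a. N - a) ` {..<N}. (m choose j) * t ^ j * (N - t) ^ (m - j))"
    by (subst sum.reindex) (auto intro: inj_onI)
  also have "\<dots> \<le> bernstein_sum m j N"
    unfolding bernstein_sum_def by (rule sum_mono2) auto
  finally have "real (\<Sum>a<N. (m choose j) * (N - a) ^ j * (N - (N - a)) ^ (m - j))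
      \<le> real (bernstein_sum m j N)"
    by linarith
  also have "\<dots> \<le> real N ^ Suc m / Suc m + (Suc m)\<^sup>2 * real N ^ m"
    by (rule bernstein_sum_upper[OF True assms])
  finally show ?thesis .
next
  case False
  then show ?thesis by (simp add: binomial_eq_0)
qed

text \<open>For each weight \<open>a\<close> of \<open>v\<close> the count is binomial; summed over \<open>a\<close> it gives
  at most \<open>c + 1\<close> Bernstein sums.\<close>

lemma card_PiE_count_shifted_le:
  assumes fin: "finite M" and v: "v \<notin> M" and M_le: "card M \<le> N" and N_pos: "0 < N"
    and b_le: "\<And>a. b a \<le> c"
  shows "real (card {y \<in> PiE (insert v M) (\<lambda>_. {..<N}). card {u \<in> M. y u + y v < N} + b (y v) = k})
    \<le> real (Suc c) * (real N ^ Suc (card M) / Suc (card M) + (Suc (card M))\<^sup>2 * real N ^ card M)"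
proof -
  define m where "m = card M"
  define U where "U = real N ^ Suc m / Suc m + (Suc m)\<^sup>2 * real N ^ m"
  define F where "F a j = (m choose j) * (N - a) ^ j * (N - (N - a)) ^ (m - j)" for a j
  have fiber: "card {g \<in> PiE M (\<lambda>_. {..<N}). card {u \<in> M. g u + a < N} + b a = k}
      \<le> (\<Sum>i\<le>c. if i \<le> k then F a (k - i) else 0)" for a
  proof -
    have "{g \<in> PiE M (\<lambda>_. {..<N}). card {u \<in> M. g u + a < N} + b a = k}
        = (if b a \<le> k then {g \<in> PiE M (\<lambda>_. {..<N}). card {u \<in> M. g u < N - a} = k - b a} else {})"
      by (auto simp: less_diff_conv)
    then have "card {g \<in> PiE M (\<lambda>_. {..<N}). card {u \<in> M. g u + a < N} + b a = k}
        = (if b a \<le> k then F a (k - b a) else 0)"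
      using card_PiE_count_below[OF fin, of "N - a" N] unfolding F_def m_def by simp
    also have "\<dots> \<le> (\<Sum>i\<le>c. if i \<le> k then F a (k - i) else 0)"
      using member_le_sum[of "b a" "{..c}" "\<lambda>i. if i \<le> k then F a (k - i) else 0"] b_le[of a]
      by auto
    finally show ?thesis .
  qed
  have upd: "{u \<in> M. (g(v := a)) u + (g(v := a)) v < N} = {u \<in> M. g u + a < N}" for g a
    using v by auto
  have "card {y \<in> PiE (insert v M) (\<lambda>_. {..<N}). card {u \<in> M. y u + y v < N} + b (y v) = k}
      = (\<Sum>a<N. card {g \<in> PiE M (\<lambda>_. {..<N}).
           card {u \<in> M. (g(v := a)) u + (g(v := a)) v < N} + b ((g(v := a)) v) = k})"
    by (rule card_PiE_insert_filter) (use fin v in auto)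
  also have "\<dots> = (\<Sum>a<N. card {g \<in> PiE M (\<lambda>_. {..<N}). card {u \<in> M. g u + a < N} + b a = k})"
    by (simp only: upd, simp only: fun_upd_same)
  also have "\<dots> \<le> (\<Sum>a<N. \<Sum>i\<le>c. if i \<le> k then F a (k - i) else 0)"
    by (rule sum_mono) (rule fiber)
  also have "\<dots> = (\<Sum>i\<le>c. \<Sum>a<N. if i \<le> k then F a (k - i) else 0)"
    by (rule sum.swap)
  finally have "real (card {y \<in> PiE (insert v M) (\<lambda>_. {..<N}). card {u \<in> M. y u + y v < N} + b (y v) = k})
      \<le> (\<Sum>i\<le>c. real (\<Sum>a<N. if i \<le> k then F a (k - i) else 0))"
    unfolding of_nat_sum[symmetric] of_nat_le_iff .
  also have "\<dots> \<le> (\<Sum>i\<le>c. U)"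
  proof (rule sum_mono)
    fix i
    show "real (\<Sum>a<N. if i \<le> k then F a (k - i) else 0) \<le> U"
      using sum_bernstein_reflected_le[of m N "k - i"] M_le N_pos
      unfolding U_def F_def m_def by (cases "i \<le> k") simp_all
  qed
  finally show ?thesis unfolding U_def m_def by simp
qed

section \<open>Threshold subgraphs\<close>

definition nbr :: "nat set set \<Rightarrow> nat \<Rightarrow> nat set" where
  "nbr G v = {u. {u, v} \<in> G}"

lemma in_nbr_commute: "u \<in> nbr G v \<longleftrightarrow> v \<in> nbr G u"
  unfolding nbr_def mem_Collect_eq by (subst insert_commute) (rule refl)

lemma nbr_subset: "is_graph n G \<Longrightarrow> nbr G v \<subseteq> {..<n}"
  by (auto simp: nbr_def is_graph_def)

lemma finite_nbr: "is_graph n G \<Longrightarrow> finite (nbr G v)"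
  by (rule finite_subset[OF nbr_subset]) auto

lemma not_in_nbr_self: "is_graph n G \<Longrightarrow> v \<notin> nbr G v"
  unfolding nbr_def is_graph_def by force

lemma degree_eq_card_nbr:
  assumes "is_graph n G"
  shows "degree G v = card (nbr G v)"
proof -
  have "{e \<in> G. v \<in> e} = (\<lambda>u. {u, v}) ` nbr G v"
  proof (rule set_eqI, rule iffI)
    fix e assume e: "e \<in> {e \<in> G. v \<in> e}"
    then have "card e = 2" using assms by (auto simp: is_graph_def)
    then obtain a b where ab: "e = {a, b}" "a \<noteq> b" by (auto simp: card_2_iff)
    then have "e = {b, v} \<or> e = {a, v}" using e by auto
    then show "e \<in> (\<lambda>u. {u, v}) ` nbr G v" using e by (auto simp: nbr_def)
  qed (auto simp: nbr_def)
  moreover have "inj_on (\<lambda>u. {u, v}) (nbr G v)"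
    using not_in_nbr_self[OF assms, of v] by (intro inj_onI) (auto simp: doubleton_eq_iff)
  ultimately show ?thesis unfolding degree_def by (simp add: card_image)
qed

definition threshold_subgraph :: "nat set set \<Rightarrow> nat \<Rightarrow> (nat \<Rightarrow> nat) \<Rightarrow> nat set set" where
  "threshold_subgraph G N x = {e \<in> G. (\<Sum>u\<in>e. x u) < N}"

definition threshold_degree :: "nat set set \<Rightarrow> nat \<Rightarrow> (nat \<Rightarrow> nat) \<Rightarrow> nat \<Rightarrow> nat" where
  "threshold_degree G N x v = card {u \<in> nbr G v. x u + x v < N}"

lemma spanning_threshold_subgraph:
  "is_graph n G \<Longrightarrow> spanning_subgraph n (threshold_subgraph G N x) G"
  by (auto simp: spanning_subgraph_def is_graph_def threshold_subgraph_def)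

lemma degree_threshold_subgraph:
  assumes "is_graph n G"
  shows "degree (threshold_subgraph G N x) v = threshold_degree G N x v"
proof -
  have "u \<noteq> v" if "u \<in> nbr G v" for u
    using that not_in_nbr_self[OF assms] by auto
  then have "nbr (threshold_subgraph G N x) v = {u \<in> nbr G v. x u + x v < N}"
    by (auto simp: nbr_def threshold_subgraph_def)
  then show ?thesis
    using spanning_threshold_subgraph[OF assms, of N x] degree_eq_card_nbr
    unfolding threshold_degree_def spanning_subgraph_def by metis
qed

section \<open>The second moment bound\<close>

lemma of_nat_card_filter_eq_sum:
  assumes "finite A"
  shows "of_nat (card {x \<in> A. P x}) = (\<Sum>x\<in>A. of_bool (P x) :: 'a :: semiring_1)"
proof -
  have "A \<inter> {x. P x} = {x \<in> A. P x}" by blast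
  then show ?thesis using sum_of_bool_eq[OF assms assms, of P, where 'a='a] by simp
qed

lemma sum_card_fibers:
  fixes f :: "nat \<Rightarrow> nat"
  assumes "\<And>v. v < n \<Longrightarrow> f v \<le> D"
  shows "(\<Sum>k\<le>D. real (card {v \<in> {..<n}. f v = k})) = real n"
proof -
  have "(\<Sum>k\<le>D. real (card {v \<in> {..<n}. f v = k})) = (\<Sum>k\<le>D. \<Sum>v<n. of_bool (f v = k))"
    by (simp only: of_nat_card_filter_eq_sum[OF finite_lessThan])
  also have "\<dots> = (\<Sum>v<n. \<Sum>k\<le>D. of_bool (f v = k))"
    by (rule sum.swap)
  also have "\<dots> = (\<Sum>v<n. 1)"
  proof (rule sum.cong[OF refl])
    fix v assume "v \<in> {..<n}"
    then show "(\<Sum>k\<le>D. of_bool (f v = k)) = (1 :: real)"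
      using assms by (simp add: of_bool_def sum.delta')
  qed
  finally show ?thesis by simp
qed

lemma sum_sq_card_fibers:
  fixes f :: "nat \<Rightarrow> nat"
  assumes "\<And>v. v < n \<Longrightarrow> f v \<le> D"
  shows "(\<Sum>k\<le>D. real (card {v \<in> {..<n}. f v = k}) ^ 2) = (\<Sum>v<n. \<Sum>w<n. of_bool (f v = f w))"
proof -
  have fiber: "real (card {v \<in> {..<n}. f v = k}) = (\<Sum>v<n. of_bool (f v = k))" for k
    by (rule of_nat_card_filter_eq_sum) simp
  have "(\<Sum>k\<le>D. real (card {v \<in> {..<n}. f v = k}) ^ 2)
      = (\<Sum>k\<le>D. \<Sum>v<n. \<Sum>w<n. of_bool (f v = k) * of_bool (f w = k))"
    unfolding fiber power2_eq_square sum_product ..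
  also have "\<dots> = (\<Sum>v<n. \<Sum>k\<le>D. \<Sum>w<n. of_bool (f v = k) * of_bool (f w = k))"
    by (rule sum.swap)
  also have "\<dots> = (\<Sum>v<n. \<Sum>w<n. \<Sum>k\<le>D. of_bool (f v = k) * of_bool (f w = k))"
    by (rule sum.cong[OF refl], rule sum.swap)
  also have "\<dots> = (\<Sum>v<n. \<Sum>w<n. of_bool (f v = f w))"
  proof (intro sum.cong refl)
    fix v w assume "v \<in> {..<n}"
    have "of_bool (f v = k) * of_bool (f w = k) = (if f v = k then of_bool (f w = f v) else 0 :: real)"
      for k by simp
    then show "(\<Sum>k\<le>D. of_bool (f v = k) * of_bool (f w = k)) = (of_bool (f v = f w) :: real)"
      using assms \<open>v \<in> {..<n}\<close> by (simp add: sum.delta' eq_commute)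
  qed
  finally show ?thesis .
qed

lemma sum_sq_deviation_eq:
  fixes a :: "nat \<Rightarrow> real"
  assumes "(\<Sum>k\<le>D. a k) = s"
  shows "(\<Sum>k\<le>D. (a k - s / Suc D)\<^sup>2) = (\<Sum>k\<le>D. (a k)\<^sup>2) - s\<^sup>2 / Suc D"
proof -
  define q where "q = s / Suc D"
  have "(\<Sum>k\<le>D. (a k - q)\<^sup>2) = (\<Sum>k\<le>D. (a k)\<^sup>2 - 2 * q * a k + q\<^sup>2)"
    by (rule sum.cong) (auto simp: power2_diff)
  also have "\<dots> = (\<Sum>k\<le>D. (a k)\<^sup>2) - 2 * q * (\<Sum>k\<le>D. a k) + Suc D * q\<^sup>2"
    by (simp add: sum.distrib sum_subtractf sum_distrib_left)
  also have "Suc D * q\<^sup>2 = s * q" unfolding q_def by (simp add: power2_eq_square)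
  finally show ?thesis using assms unfolding q_def by (simp add: power2_eq_square)
qed
lemma min_1_ratio_le:
  assumes "c \<le> D"
  shows "min 1 (real (Suc c) / Suc (D - c)) \<le> 1 / Suc D + 4 * real c / Suc D"
proof (cases "2 * c \<le> D")
  case True
  have D_c: "real (Suc (D - c)) = real D + 1 - real c" using assms by simp
  have "(1 + 4 * real c) * (real D + 1 - real c) - (real c + 1) * (real D + 1)
      = real c * (3 * real D + 2 - 4 * real c)"
    by (simp add: algebra_simps)
  moreover have "0 \<le> real c * (3 * real D + 2 - 4 * real c)" using True by simp
  moreover have "0 < real D + 1 - real c" using assms by simp
  ultimately have "(real c + 1) / (real D + 1 - real c) \<le> (1 + 4 * real c) / (real D + 1)"
    by (simp add: divide_simps)
  then have "real (Suc c) / Suc (D - c) \<le> 1 / Suc D + 4 * real c / Suc D"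
    unfolding D_c by (simp add: add_divide_distrib add.commute)
  then show ?thesis by linarith
next
  case False
  then have "1 \<le> 4 * real c / Suc D" by (simp add: field_simps)
  moreover have "0 \<le> 1 / real (Suc D)" by simp
  ultimately show ?thesis by linarith
qed

locale regular_graph =
  fixes n :: nat and G :: "nat set set" and D :: nat
  assumes graph: "is_graph n G"
    and card_nbr: "v < n \<Longrightarrow> card (nbr G v) = D"
begin

lemma threshold_degree_le: "v < n \<Longrightarrow> threshold_degree G N x v \<le> D"
  unfolding threshold_degree_def using card_nbr finite_nbr[OF graph]
  by (metis (no_types, lifting) card_mono mem_Collect_eq subsetI)

lemma card_common_nbr_le: "v < n \<Longrightarrow> card (nbr G v \<inter> nbr G w) \<le> D"
  using card_nbr finite_nbr[OF graph] by (metis card_mono inf_le1)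

text \<open>The weights outside \<open>A\<close> determine the degree of \<open>w\<close>; given them, the degree of \<open>v\<close>
  is an independent count over its private neighbours plus a bounded contribution of
  the common ones.\<close>

lemma card_threshold_degree_eq_override_le:
  assumes v: "v < n" and vw: "v \<noteq> w" "w \<notin> nbr G v" and N_pos: "0 < N" and D_le: "D \<le> N"
  defines "C \<equiv> nbr G v \<inter> nbr G w"
  defines "A \<equiv> insert v (nbr G v - C)"
  shows "real (card {y \<in> PiE A (\<lambda>_. {..<N}).
      threshold_degree G N (override_on z y A) v = threshold_degree G N (override_on z y A) w})
    \<le> real (Suc (card C))
      * (real N ^ Suc (D - card C) / Suc (D - card C) + (Suc (D - card C))\<^sup>2 * real N ^ (D - card C))"
proof -
  define M where "M = nbr G v - C"
  define b where "b a = card {u \<in> C. z u + a < N}" for a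
  have fin_v: "finite (nbr G v)" by (rule finite_nbr[OF graph])
  have C_sub: "C \<subseteq> nbr G v" unfolding C_def by auto
  have card_M: "card M = D - card C"
    unfolding M_def using card_Diff_subset[OF finite_subset[OF C_sub fin_v] C_sub] card_nbr[OF v]
    by simp
  have fin_M: "finite M" unfolding M_def using fin_v by simp
  have v_M: "v \<notin> M" unfolding M_def using not_in_nbr_self[OF graph] by auto
  have b_le: "b a \<le> card C" for a unfolding b_def
    by (rule card_mono) (use finite_subset[OF C_sub fin_v] in auto)
  have "u \<notin> A" if "u = w \<or> u \<in> nbr G w" for u
    using that vw in_nbr_commute[of v G w] unfolding A_def C_def by auto
  then have deg_w: "threshold_degree G N (override_on z y A) w = threshold_degree G N z w" for y
    unfolding threshold_degree_def override_on_def by (intro arg_cong[where f=card]) auto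
  have C_A: "u \<notin> A" if "u \<in> C" for u
    using that not_in_nbr_self[OF graph, of v] unfolding A_def C_def by auto
  have deg_v: "threshold_degree G N (override_on z y A) v = card {u \<in> M. y u + y v < N} + b (y v)"
    for y
  proof -
    have "{u \<in> nbr G v. override_on z y A u + override_on z y A v < N}
        = {u \<in> M. y u + y v < N} \<union> {u \<in> C. z u + y v < N}"
      unfolding override_on_def using C_A C_sub by (auto simp: A_def M_def)
    moreover have "card ({u \<in> M. y u + y v < N} \<union> {u \<in> C. z u + y v < N})
        = card {u \<in> M. y u + y v < N} + card {u \<in> C. z u + y v < N}"
      by (rule card_Un_disjoint) (use fin_M finite_subset[OF C_sub fin_v] in \<open>auto simp: M_def\<close>)
    ultimately show ?thesis unfolding threshold_degree_def b_def by simp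
  qed
  have "{y \<in> PiE A (\<lambda>_. {..<N}).
      threshold_degree G N (override_on z y A) v = threshold_degree G N (override_on z y A) w}
    = {y \<in> PiE (insert v M) (\<lambda>_. {..<N}).
      card {u \<in> M. y u + y v < N} + b (y v) = threshold_degree G N z w}"
    unfolding deg_v deg_w by (simp add: A_def M_def)
  then show ?thesis
    using card_PiE_count_shifted_le[where b=b and c="card C" and k="threshold_degree G N z w",
        OF fin_M v_M _ N_pos b_le]
      D_le card_M
    by simp
qed

lemma card_threshold_degree_eq_nonadjacent_le:
  assumes vw: "v < n" "w < n" "v \<noteq> w" "w \<notin> nbr G v" and N_pos: "0 < N" and D_le: "D \<le> N"
  defines "c \<equiv> card (nbr G v \<inter> nbr G w)"
  shows "real (card {x \<in> PiE {..<n} (\<lambda>_. {..<N}). threshold_degree G N x v = threshold_degree G N x w})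
    \<le> real N ^ n * (real (Suc c) * (1 / Suc (D - c) + (Suc (D - c))\<^sup>2 / real N))"
proof -
  define m where "m = D - c"
  define A where "A = insert v (nbr G v - nbr G v \<inter> nbr G w)"
  define J where "J = {..<n} - A"
  define U where "U = real (Suc c) * (real N ^ Suc m / Suc m + (Suc m)\<^sup>2 * real N ^ m)"
  have A_sub: "A \<subseteq> {..<n}" unfolding A_def using nbr_subset[OF graph, of v] vw by auto
  have fin_A: "finite A" using A_sub finite_subset by auto
  have card_A: "card A = Suc m"
    unfolding A_def m_def c_def using finite_nbr[OF graph, of v] not_in_nbr_self[OF graph, of v]
    by (simp add: card_Diff_subset card_nbr[OF vw(1)])
  have m_less: "Suc m \<le> n" using card_A A_sub by (metis card_lessThan card_mono finite_lessThan)
  have "card {x \<in> PiE {..<n} (\<lambda>_. {..<N}). threshold_degree G N x v = threshold_degree G N x w}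
      = (\<Sum>z\<in>PiE J (\<lambda>_. {..<N}). card {y \<in> PiE A (\<lambda>_. {..<N}).
          threshold_degree G N (override_on z y A) v = threshold_degree G N (override_on z y A) w})"
    using card_PiE_Un_filter[OF fin_A, of J "\<lambda>_. {..<N}"] A_sub by (simp add: J_def Un_absorb1)
  then have "real (card {x \<in> PiE {..<n} (\<lambda>_. {..<N}). threshold_degree G N x v = threshold_degree G N x w})
      = (\<Sum>z\<in>PiE J (\<lambda>_. {..<N}). real (card {y \<in> PiE A (\<lambda>_. {..<N}).
          threshold_degree G N (override_on z y A) v = threshold_degree G N (override_on z y A) w}))"
    by simp
  also have "\<dots> \<le> (\<Sum>z\<in>PiE J (\<lambda>_. {..<N}). U)"
    by (rule sum_mono)
      (use card_threshold_degree_eq_override_le[OF vw(1,3,4) N_pos D_le] in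
        \<open>simp add: U_def m_def c_def A_def\<close>)
  also have "\<dots> = real N ^ (n - Suc m) * U"
    using card_A A_sub fin_A by (simp add: J_def card_PiE card_Diff_subset)
  also have "\<dots> = real N ^ n * (real (Suc c) * (1 / Suc m + (Suc m)\<^sup>2 / real N))"
  proof -
    have e1: "real N ^ (n - Suc m) * real N ^ Suc m = real N ^ n"
      using m_less by (metis le_add_diff_inverse2 power_add)
    then have e2: "real N ^ (n - Suc m) * real N ^ m = real N ^ n / real N"
      using N_pos by (simp add: field_simps)
    have "real N ^ (n - Suc m) * U
        = real (Suc c) * ((real N ^ (n - Suc m) * real N ^ Suc m) / Suc m
           + (Suc m)\<^sup>2 * (real N ^ (n - Suc m) * real N ^ m))"
      unfolding U_def by (simp add: algebra_simps)
    also have "\<dots> = real N ^ n * (real (Suc c) * (1 / Suc m + (Suc m)\<^sup>2 / real N))"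
      unfolding e1 e2 by (simp add: field_simps)
    finally show ?thesis .
  qed
  finally show ?thesis unfolding m_def .
qed

lemma card_threshold_degree_eq_le:
  assumes vw: "v < n" "w < n" and N_pos: "0 < N" and D_le: "D \<le> N"
  defines "c \<equiv> card (nbr G v \<inter> nbr G w)"
  shows "real (card {x \<in> PiE {..<n} (\<lambda>_. {..<N}). threshold_degree G N x v = threshold_degree G N x w})
    \<le> real N ^ n * (of_bool (v = w \<or> w \<in> nbr G v) + 1 / Suc D + 4 * real c / Suc D
      + real (Suc c) * (Suc D)\<^sup>2 / real N)"
proof -
  define P where "P = real (card {x \<in> PiE {..<n} (\<lambda>_. {..<N}).
    threshold_degree G N x v = threshold_degree G N x w}) / real N ^ n"
  have N_pow: "0 < real N ^ n" using N_pos by simp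
  have "card {x \<in> PiE {..<n} (\<lambda>_. {..<N}). threshold_degree G N x v = threshold_degree G N x w}
      \<le> card (PiE {..<n} (\<lambda>_. {..<N}))"
    by (rule card_mono) (auto intro!: finite_PiE)
  then have P_le_1: "P \<le> 1" unfolding P_def using N_pow by (simp add: card_PiE)
  have error_nonneg: "0 \<le> real (Suc c) * (Suc D)\<^sup>2 / real N" by simp
  have "P \<le> of_bool (v = w \<or> w \<in> nbr G v) + 1 / Suc D + 4 * real c / Suc D
      + real (Suc c) * (Suc D)\<^sup>2 / real N"
  proof (cases "v = w \<or> w \<in> nbr G v")
    case True
    then have "of_bool (v = w \<or> w \<in> nbr G v) = (1 :: real)" by simp
    moreover have "0 \<le> 1 / real (Suc D) + 4 * real c / Suc D" by simp
    ultimately show ?thesis using P_le_1 error_nonneg by linarith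
  next
    case False
    have "P \<le> real (Suc c) * (1 / Suc (D - c) + (Suc (D - c))\<^sup>2 / real N)"
      using card_threshold_degree_eq_nonadjacent_le[OF vw _ _ N_pos D_le] False N_pow
      unfolding P_def c_def by (simp add: divide_simps mult.commute)
    also have "\<dots> \<le> real (Suc c) / Suc (D - c) + real (Suc c) * (Suc D)\<^sup>2 / real N"
      by (simp add: distrib_left divide_right_mono power_mono)
    finally have "P \<le> min 1 (real (Suc c) / Suc (D - c)) + real (Suc c) * (Suc D)\<^sup>2 / real N"
      using P_le_1 error_nonneg by linarith
    also have "\<dots> \<le> 1 / Suc D + 4 * real c / Suc D + real (Suc c) * (Suc D)\<^sup>2 / real N"
      using min_1_ratio_le[OF card_common_nbr_le[OF vw(1)]] unfolding c_def by simp
    finally show ?thesis using False by simp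
  qed
  then show ?thesis unfolding P_def using N_pow by (simp add: divide_simps mult.commute)
qed

lemma sum_closed_nbr_indicator:
  assumes "v < n"
  shows "(\<Sum>w<n. of_bool (v = w \<or> w \<in> nbr G v) :: real) = real D + 1"
proof -
  have "insert v (nbr G v) \<subseteq> {..<n}" using nbr_subset[OF graph, of v] assms by auto
  then have "{..<n} \<inter> {w. v = w \<or> w \<in> nbr G v} = insert v (nbr G v)" by auto
  moreover have "card (insert v (nbr G v)) = Suc D"
    using not_in_nbr_self[OF graph, of v] finite_nbr[OF graph, of v] card_nbr[OF assms] by simp
  ultimately show ?thesis by (subst sum_of_bool_eq) simp_all
qed

lemma sum_card_common_nbr:
  "(\<Sum>v<n. \<Sum>w<n. real (card (nbr G v \<inter> nbr G w))) = real n * real D ^ 2"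
proof -
  define I where "I u v = (of_bool (u \<in> nbr G v) :: real)" for u v
  have common: "real (card (nbr G v \<inter> nbr G w)) = (\<Sum>u<n. I u v * I u w)" for v w
  proof -
    have "(\<Sum>u<n. I u v * I u w) = (\<Sum>u<n. of_bool (u \<in> nbr G v \<inter> nbr G w))"
      by (intro sum.cong) (auto simp: I_def)
    also have "\<dots> = real (card ({..<n} \<inter> {u. u \<in> nbr G v \<inter> nbr G w}))"
      by (rule sum_of_bool_eq) simp_all
    also have "{..<n} \<inter> {u. u \<in> nbr G v \<inter> nbr G w} = nbr G v \<inter> nbr G w"
      using nbr_subset[OF graph, of v] by auto
    finally show ?thesis ..
  qed
  have row: "(\<Sum>v<n. I u v) = real D" if "u < n" for u
  proof -
    have "{..<n} \<inter> {v. u \<in> nbr G v} = nbr G u"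
      using nbr_subset[OF graph, of u] in_nbr_commute[of u G] by auto
    then show ?thesis unfolding I_def using card_nbr[OF that] by simp
  qed
  have "(\<Sum>v<n. \<Sum>w<n. real (card (nbr G v \<inter> nbr G w))) = (\<Sum>v<n. \<Sum>w<n. \<Sum>u<n. I u v * I u w)"
    by (simp add: common)
  also have "\<dots> = (\<Sum>v<n. \<Sum>u<n. \<Sum>w<n. I u v * I u w)"
    by (rule sum.cong[OF refl], rule sum.swap)
  also have "\<dots> = (\<Sum>u<n. \<Sum>v<n. \<Sum>w<n. I u v * I u w)"
    by (rule sum.swap)
  also have "\<dots> = (\<Sum>u<n. (\<Sum>v<n. I u v) * (\<Sum>w<n. I u w))"
    by (simp add: sum_product)
  also have "\<dots> = (\<Sum>u<n. real D * real D)"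
    by (rule sum.cong) (auto simp: row)
  finally show ?thesis by (simp add: power2_eq_square)
qed

lemma sum_card_threshold_degree_eq_le:
  assumes n_pos: "0 < n" and N_large: "(Suc D)\<^sup>2 * (n * D\<^sup>2 + n\<^sup>2) \<le> N"
  shows "(\<Sum>v<n. \<Sum>w<n. real (card {x \<in> PiE {..<n} (\<lambda>_. {..<N}).
      threshold_degree G N x v = threshold_degree G N x w}))
    \<le> real N ^ n * (6 * real n * Suc D + (real n)\<^sup>2 / Suc D)"
proof -
  have "1 \<le> n * D\<^sup>2 + n\<^sup>2" using n_pos by (simp add: Suc_le_eq)
  then have "(Suc D)\<^sup>2 * 1 \<le> (Suc D)\<^sup>2 * (n * D\<^sup>2 + n\<^sup>2)" by (rule mult_left_mono) simp
  moreover have "Suc D \<le> (Suc D)\<^sup>2" by (simp add: power2_eq_square)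
  ultimately have "Suc D \<le> (Suc D)\<^sup>2 * (n * D\<^sup>2 + n\<^sup>2)" by linarith
  then have N_pos: "0 < N" and D_le: "D \<le> N" using N_large by linarith+
  define c where "c v w = real (card (nbr G v \<inter> nbr G w))" for v w
  define K where "K = (real (Suc D))\<^sup>2 / real N"
  have "real (card {x \<in> PiE {..<n} (\<lambda>_. {..<N}). threshold_degree G N x v = threshold_degree G N x w})
      \<le> real N ^ n * (of_bool (v = w \<or> w \<in> nbr G v) + 1 / Suc D + (4 / Suc D + K) * c v w + K)"
    if "v < n" "w < n" for v w
    using card_threshold_degree_eq_le[OF that N_pos D_le]
    by (simp add: c_def K_def add_divide_distrib algebra_simps)
  then have "(\<Sum>v<n. \<Sum>w<n. real (card {x \<in> PiE {..<n} (\<lambda>_. {..<N}).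
      threshold_degree G N x v = threshold_degree G N x w}))
    \<le> (\<Sum>v<n. \<Sum>w<n. real N ^ n * (of_bool (v = w \<or> w \<in> nbr G v) + 1 / Suc D
      + (4 / Suc D + K) * c v w + K))"
    by (intro sum_mono) auto
  also have "\<dots> = real N ^ n * ((\<Sum>v<n. \<Sum>w<n. of_bool (v = w \<or> w \<in> nbr G v))
      + real n * real n / Suc D + (4 / Suc D + K) * (\<Sum>v<n. \<Sum>w<n. c v w) + K * real n * real n)"
    by (simp add: sum.distrib sum_distrib_left sum_divide_distrib algebra_simps)
  also have "\<dots> = real N ^ n * (real n * Suc D + (real n)\<^sup>2 / Suc D
      + 4 * real n * ((real D)\<^sup>2 / Suc D) + K * (real n * (real D)\<^sup>2 + real n * real n))"
    unfolding c_def sum_card_common_nbr using sum_closed_nbr_indicator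
    by (simp add: power2_eq_square algebra_simps)
  also have "\<dots> \<le> real N ^ n * (6 * real n * Suc D + (real n)\<^sup>2 / Suc D)"
  proof (rule mult_left_mono)
    have "(real D)\<^sup>2 / Suc D \<le> Suc D" by (simp add: field_simps power2_eq_square)
    then have "4 * real n * ((real D)\<^sup>2 / Suc D) \<le> 4 * real n * Suc D" by (rule mult_left_mono) simp_all
    moreover have "(real (Suc D))\<^sup>2 * (real n * (real D)\<^sup>2 + real n * real n) \<le> real N"
      using of_nat_mono[OF N_large, where 'a=real] by (simp add: power2_eq_square algebra_simps)
    then have "K * (real n * (real D)\<^sup>2 + real n * real n) \<le> 1"
      unfolding K_def using N_pos by (simp add: field_simps)
    moreover have "1 * 1 \<le> real n * Suc D" using n_pos by (intro mult_mono) simp_all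
    ultimately show "real n * Suc D + (real n)\<^sup>2 / Suc D + 4 * real n * ((real D)\<^sup>2 / Suc D)
        + K * (real n * (real D)\<^sup>2 + real n * real n) \<le> 6 * real n * Suc D + (real n)\<^sup>2 / Suc D"
      by linarith
  qed simp
  finally show ?thesis .
qed

lemma exists_threshold_degree_counts_close:
  assumes n_pos: "0 < n" and N_large: "(Suc D)\<^sup>2 * (n * D\<^sup>2 + n\<^sup>2) \<le> N"
  shows "\<exists>x. \<forall>k\<le>D. \<bar>real (card {v \<in> {..<n}. threshold_degree G N x v = k}) - real n / Suc D\<bar>
    \<le> sqrt (6 * real n * Suc D)"
proof -
  define \<Omega> where "\<Omega> = PiE {..<n} (\<lambda>_. {..<N})"
  define B where "B = 6 * real n * Suc D"
  define S where "S x = (\<Sum>k\<le>D. (real (card {v \<in> {..<n}. threshold_degree G N x v = k})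
    - real n / Suc D)\<^sup>2)" for x
  have "0 < (Suc D)\<^sup>2 * (n * D\<^sup>2 + n\<^sup>2)" using n_pos by simp
  then have N_pos: "0 < N" using N_large by linarith
  have fin_\<Omega>: "finite \<Omega>" unfolding \<Omega>_def by (auto intro!: finite_PiE)
  have card_\<Omega>: "card \<Omega> = N ^ n" unfolding \<Omega>_def by (simp add: card_PiE)
  have S_eq: "S x = (\<Sum>v<n. \<Sum>w<n. of_bool (threshold_degree G N x v = threshold_degree G N x w))
      - (real n)\<^sup>2 / Suc D" for x
    unfolding S_def
    by (simp only: sum_sq_deviation_eq[OF sum_card_fibers] sum_sq_card_fibers threshold_degree_le)
  have "(\<Sum>x\<in>\<Omega>. \<Sum>v<n. \<Sum>w<n. of_bool (threshold_degree G N x v = threshold_degree G N x w))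
      = (\<Sum>v<n. \<Sum>w<n. \<Sum>x\<in>\<Omega>. of_bool (threshold_degree G N x v = threshold_degree G N x w))"
    by (subst sum.swap, rule sum.cong[OF refl], rule sum.swap)
  also have "\<dots> = (\<Sum>v<n. \<Sum>w<n. real (card {x \<in> \<Omega>. threshold_degree G N x v = threshold_degree G N x w}))"
    by (simp only: of_nat_card_filter_eq_sum[OF fin_\<Omega>])
  also have "\<dots> \<le> real (card \<Omega>) * (B + (real n)\<^sup>2 / Suc D)"
    using sum_card_threshold_degree_eq_le[OF n_pos N_large] unfolding \<Omega>_def B_def card_\<Omega>[unfolded \<Omega>_def]
    by simp
  finally have sum_S: "sum S \<Omega> \<le> real (card \<Omega>) * B"
    unfolding S_eq by (simp add: sum_subtractf algebra_simps)
  have "\<exists>x\<in>\<Omega>. S x \<le> B"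
  proof (rule ccontr)
    assume "\<not> (\<exists>x\<in>\<Omega>. S x \<le> B)"
    moreover have "\<Omega> \<noteq> {}" using card_\<Omega> N_pos by auto
    ultimately have "(\<Sum>_\<in>\<Omega>. B) < sum S \<Omega>"
      by (intro sum_strict_mono[OF fin_\<Omega>]) (auto simp: not_le)
    with sum_S show False by simp
  qed
  then obtain x where "S x \<le> B" by blast
  have "\<bar>real (card {v \<in> {..<n}. threshold_degree G N x v = k}) - real n / Suc D\<bar> \<le> sqrt B"
    if "k \<le> D" for k
  proof -
    have "(real (card {v \<in> {..<n}. threshold_degree G N x v = k}) - real n / Suc D)\<^sup>2 \<le> S x"
      unfolding S_def by (rule member_le_sum) (use that in auto)
    with \<open>S x \<le> B\<close> show ?thesis using real_le_rsqrt by fastforce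
  qed
  then show ?thesis unfolding B_def by blast
qed

lemma exists_spanning_subgraph_mdeg_close:
  "\<exists>H. spanning_subgraph n H G \<and>
    (\<forall>k\<le>D. \<bar>real (mdeg n H k) - real n / real (D + 1)\<bar> \<le> sqrt (6 * real n * (real D + 1)))"
proof (cases "n = 0")
  case True
  have "spanning_subgraph n {} G" unfolding spanning_subgraph_def is_graph_def by simp
  moreover have "mdeg n {} k = 0" for k unfolding mdeg_def using True by simp
  ultimately show ?thesis using True by (intro exI[of _ "{}"]) simp
next
  case False
  define N where "N = (Suc D)\<^sup>2 * (n * D\<^sup>2 + n\<^sup>2)"
  obtain x where x: "\<forall>k\<le>D. \<bar>real (card {v \<in> {..<n}. threshold_degree G N x v = k}) - real n / Suc D\<bar>
      \<le> sqrt (6 * real n * Suc D)"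
    using exists_threshold_degree_counts_close[of N] False unfolding N_def by auto
  have "mdeg n (threshold_subgraph G N x) k = card {v \<in> {..<n}. threshold_degree G N x v = k}" for k
    by (simp add: mdeg_def degree_threshold_subgraph[OF graph])
  with x spanning_threshold_subgraph[OF graph] show ?thesis
    by (intro exI[of _ "threshold_subgraph G N x"]) (simp add: add.commute)
qed

end

lemma regular_graph_if_regular: "is_graph n G \<Longrightarrow> regular n G D \<Longrightarrow> regular_graph n G D"
  by unfold_locales (simp_all add: regular_def degree_eq_card_nbr)

lemma sqrt_cube_div_mult_eq:
  "sqrt (6 * (real D + 1) ^ 3 / real n) * (real n / real (D + 1)) = sqrt (6 * real n * (real D + 1))"
proof (cases "n = 0")
  case False
  have cancel: "6 * a ^ 3 / b * (b / a)\<^sup>2 = 6 * b * a" if "0 < a" "0 < b" for a b :: real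
    using that by (simp add: field_simps power2_eq_square power3_eq_cube)
  have "sqrt (6 * (real D + 1) ^ 3 / real n) * (real n / real (D + 1))
      = sqrt (6 * (real D + 1) ^ 3 / real n) * sqrt ((real n / (real D + 1))\<^sup>2)"
    by (simp add: add.commute)
  also have "\<dots> = sqrt (6 * (real D + 1) ^ 3 / real n * (real n / (real D + 1))\<^sup>2)"
    by (rule real_sqrt_mult[symmetric])
  also have "6 * (real D + 1) ^ 3 / real n * (real n / (real D + 1))\<^sup>2 = 6 * real n * (real D + 1)"
    using cancel False by simp
  finally show ?thesis .
qed simp

lemma tendsto_zero_without_ln_factor:
  fixes f :: "nat \<Rightarrow> real"
  assumes lim: "(\<lambda>n. f n * ln (real n) / real n) \<longlonglongrightarrow> 0" and nonneg: "\<And>n. 0 \<le> f n"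
  shows "(\<lambda>n. f n / real n) \<longlonglongrightarrow> 0"
proof (rule real_tendsto_sandwich[OF _ _ tendsto_const lim])
  show "\<forall>\<^sub>F n in sequentially. 0 \<le> f n / real n" using nonneg by simp
  show "\<forall>\<^sub>F n in sequentially. f n / real n \<le> f n * ln (real n) / real n"
  proof (rule eventually_sequentiallyI[of 3])
    fix n :: nat assume n: "3 \<le> n"
    have "exp 1 \<le> real n" using exp_le n by linarith
    then have "1 \<le> ln (real n)" using n by (subst ln_ge_iff) auto
    then have "f n * 1 \<le> f n * ln (real n)" using nonneg by (intro mult_left_mono) auto
    then show "f n / real n \<le> f n * ln (real n) / real n"
      by (intro divide_right_mono) auto
  qed
qed

lemma sqrt_cube_div_tendsto_zero:
  fixes d :: "nat \<Rightarrow> nat"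
  assumes "(\<lambda>n. real (d n) ^ 3 * ln (real n) / real n) \<longlonglongrightarrow> 0"
  shows "(\<lambda>n. sqrt (6 * (real (d n) + 1) ^ 3 / real n)) \<longlonglongrightarrow> 0"
proof -
  have cube_div: "(\<lambda>n. real (d n) ^ 3 / real n) \<longlonglongrightarrow> 0"
    by (rule tendsto_zero_without_ln_factor[OF assms]) simp
  have "(\<lambda>n. 48 * (real (d n) ^ 3 / real n) + 48 * (1 / real n)) \<longlonglongrightarrow> 0"
    using tendsto_add[OF tendsto_mult_right_zero[OF cube_div, of 48]
        tendsto_mult_right_zero[OF lim_1_over_n, of 48]]
    by (simp add: mult.commute)
  then have "(\<lambda>n. 6 * (real (d n) + 1) ^ 3 / real n) \<longlonglongrightarrow> 0"
  proof (rule real_tendsto_sandwich[OF _ _ tendsto_const, rotated 2])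
    show "\<forall>\<^sub>F n in sequentially. 0 \<le> 6 * (real (d n) + 1) ^ 3 / real n" by simp
    show "\<forall>\<^sub>F n in sequentially.
        6 * (real (d n) + 1) ^ 3 / real n \<le> 48 * (real (d n) ^ 3 / real n) + 48 * (1 / real n)"
    proof (rule always_eventually, rule allI)
      fix n
      have "(real (d n) + 1) ^ 3 \<le> 8 * (real (d n) ^ 3 + 1)"
      proof (cases "d n = 0")
        case False
        then have "(real (d n) + 1) ^ 3 \<le> (2 * real (d n)) ^ 3" by (intro power_mono) simp_all
        then show ?thesis by (simp add: power_mult_distrib)
      qed simp
      then show "6 * (real (d n) + 1) ^ 3 / real n \<le> 48 * (real (d n) ^ 3 / real n) + 48 * (1 / real n)"
        by (simp add: divide_right_mono add_divide_distrib[symmetric])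
    qed
  qed
  then show ?thesis using tendsto_real_sqrt by fastforce
qed

theorem theorem1p3:
  fixes d :: "nat \<Rightarrow> nat"
  assumes "(\<lambda>n. real (d n) ^ 3 * ln (real n) / real n) \<longlonglongrightarrow> 0"
  shows "\<exists>\<eta> :: nat \<Rightarrow> real. (\<forall>n. \<eta> n \<ge> 0) \<and> \<eta> \<longlonglongrightarrow> 0 \<and>
    (\<forall>n G. is_graph n G \<and> regular n G (d n) \<longrightarrow>
       (\<exists>H. spanning_subgraph n H G \<and>
          (\<forall>k \<le> d n. \<bar>real (mdeg n H k) - real n / real (d n + 1)\<bar>
                        \<le> \<eta> n * (real n / real (d n + 1)))))"
proof -
  define \<eta> where "\<eta> n = sqrt (6 * (real (d n) + 1) ^ 3 / real n)" for n
  have "\<exists>H. spanning_subgraph n H G \<and>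
      (\<forall>k \<le> d n. \<bar>real (mdeg n H k) - real n / real (d n + 1)\<bar> \<le> \<eta> n * (real n / real (d n + 1)))"
    if "is_graph n G" "regular n G (d n)" for n G
  proof -
    interpret regular_graph n G "d n" using regular_graph_if_regular[OF that] .
    show ?thesis
      using exists_spanning_subgraph_mdeg_close unfolding \<eta>_def sqrt_cube_div_mult_eq .
  qed
  moreover have "\<eta> \<longlonglongrightarrow> 0" unfolding \<eta>_def by (rule sqrt_cube_div_tendsto_zero[OF assms])
  ultimately show ?thesis by (intro exI[of _ \<eta>]) (auto simp: \<eta>_def)
qed

end
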